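(* For all positive integers $\ell$ and $n$, $\mathrm{IR}(K_{1,\ell}, K_{1,n}) = n+\ell$.
   Context: All graphs are finite and simple. $K_{1,m}$ denotes the star with $m$ edges. For graphs $F$, $H$, $G$, write $F \overset{\text{ind}}{\longrightarrow} (H,G)$ if for every coloring of the edges of $F$ with red and blue there is either a red induced copy of $H$ (a vertex set $S\subseteq V(F)$ with $F[S]\cong H$ and all edges of $F[S]$ red) or a blue induced copy of $G$ (defined analogously with blue). The induced Ramsey number $\mathrm{IR}(H,G)$ is the smallest number of vertices of a graph $F$ with $F \overset{\text{ind}}{\longrightarrow} (H,G)$. *)

theory Defs
  imports Main
begin

definition simple_graph :: "'a set \<Rightarrow> 'a set set \<Rightarrow> bool" where
  "simple_graph V E \<longleftrightarrow> finite V \<and> (\<forall>e\<in>E. e \<subseteq> V \<and> card e = 2)"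

definition graph_iso :: "'a set \<Rightarrow> 'a set set \<Rightarrow> 'b set \<Rightarrow> 'b set set \<Rightarrow> bool" where
  "graph_iso V1 E1 V2 E2 \<longleftrightarrow>
     (\<exists>f. bij_betw f V1 V2 \<and> (\<forall>x\<in>V1. \<forall>y\<in>V1. ({x, y} \<in> E1 \<longleftrightarrow> {f x, f y} \<in> E2)))"

definition induced_edges :: "'a set set \<Rightarrow> 'a set \<Rightarrow> 'a set set" where
  "induced_edges E S = {e \<in> E. e \<subseteq> S}"

definition star_V :: "nat \<Rightarrow> nat set" where
  "star_V m = {0..m}"

definition star_E :: "nat \<Rightarrow> nat set set" where
  "star_E m = {{0, i} | i. i \<in> {1..m}}"

text \<open>A monochromatic induced copy of (VH,EH) in colour col (True = red, False = blue)
  under the colouring c of the edges of F = (V,E).\<close>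

definition mono_induced_copy ::
  "'a set \<Rightarrow> 'a set set \<Rightarrow> ('a set \<Rightarrow> bool) \<Rightarrow> bool \<Rightarrow> 'b set \<Rightarrow> 'b set set \<Rightarrow> bool" where
  "mono_induced_copy V E c col VH EH \<longleftrightarrow>
     (\<exists>S. S \<subseteq> V \<and> graph_iso S (induced_edges E S) VH EH \<and>
          (\<forall>e\<in>induced_edges E S. c e = col))"

definition ind_arrows ::
  "'a set \<Rightarrow> 'a set set \<Rightarrow> 'b set \<Rightarrow> 'b set set \<Rightarrow> 'c set \<Rightarrow> 'c set set \<Rightarrow> bool" where
  "ind_arrows V E VH EH VG EG \<longleftrightarrow>
     (\<forall>c :: 'a set \<Rightarrow> bool.
        mono_induced_copy V E c True VH EH \<or> mono_induced_copy V E c False VG EG)"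

text \<open>Every finite graph is isomorphic to one on vertex set {0..<N},
  so it suffices to range over such graphs.\<close>

definition IR :: "'b set \<Rightarrow> 'b set set \<Rightarrow> 'c set \<Rightarrow> 'c set set \<Rightarrow> nat" where
  "IR VH EH VG EG = (LEAST N. \<exists>E :: nat set set.
      simple_graph {0..<N} E \<and> ind_arrows {0..<N} E VH EH VG EG)"

end

theory Submission
  imports Defs
begin

text \<open>
  Upper bound: in the star K_{1,m} with m = l + n - 1 every set of leaves spans an induced
  star with the centre, and by pigeonhole at least l spokes are red or at least n are blue.

  Lower bound, by induction on |V| < l + n, assuming l <= n by the symmetry of the colours:
  pick v in a maximum independent set I. The leaves of an induced star centred at v form an
  independent set disjoint from I, so there are at most |V|/2 < n of them. Colour V - v
  inductively without a red K_{1,l} and without a blue K_{1,n-1}, and all edges at v blue.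
  Then a red star avoids v, and a blue K_{1,n} is not centred at v, so deleting v from it
  leaves a blue K_{1,n-1} in V - v.
\<close>

definition independent :: "'a set set \<Rightarrow> 'a set \<Rightarrow> bool" where
  "independent E I \<longleftrightarrow> (\<forall>x\<in>I. \<forall>y\<in>I. x \<noteq> y \<longrightarrow> {x, y} \<notin> E)"

definition induced_star :: "'a set \<Rightarrow> 'a set set \<Rightarrow> 'a \<Rightarrow> 'a set \<Rightarrow> bool" where
  "induced_star V E u L \<longleftrightarrow>
     u \<in> V \<and> L \<subseteq> V - {u} \<and> (\<forall>x\<in>L. {u, x} \<in> E) \<and> independent E L"

text \<open>Asking for at least \<open>m\<close> leaves is equivalent to exactly \<open>m\<close> (see
  \<open>induced_star_subset\<close>) and survives the deletion of a leaf.\<close>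

definition has_mono_star ::
  "'a set \<Rightarrow> 'a set set \<Rightarrow> ('a set \<Rightarrow> bool) \<Rightarrow> bool \<Rightarrow> nat \<Rightarrow> bool" where
  "has_mono_star V E c col m \<longleftrightarrow>
     (\<exists>u L. induced_star V E u L \<and> m \<le> card L \<and> (\<forall>x\<in>L. c {u, x} = col))"

lemma induced_star_subset:
  "induced_star V E u L \<Longrightarrow> L' \<subseteq> L \<Longrightarrow> induced_star V E u L'"
  unfolding induced_star_def independent_def by blast

lemma induced_star_Diff_vertex:
  "induced_star V E u L \<Longrightarrow> u \<noteq> v \<Longrightarrow> induced_star (V - {v}) E u (L - {v})"
  unfolding induced_star_def independent_def by blast

lemma doubleton_mem_star_E:
  "{a, b} \<in> star_E m \<longleftrightarrow> (a = 0 \<and> b \<in> {1..m}) \<or> (b = 0 \<and> a \<in> {1..m})"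
  unfolding star_E_def by (auto simp: doubleton_eq_iff)

lemma simple_graph_star: "simple_graph (star_V m) (star_E m)"
  unfolding simple_graph_def star_V_def star_E_def by auto

lemma mono_induced_copy_imp_has_mono_star:
  assumes "mono_induced_copy V E c col (star_V m) (star_E m)"
  shows "has_mono_star V E c col m"
proof -
  obtain S f where "S \<subseteq> V" and f: "bij_betw f S {0..m}"
    and iso: "\<And>x y. x \<in> S \<Longrightarrow> y \<in> S \<Longrightarrow> {x, y} \<in> induced_edges E S \<longleftrightarrow> {f x, f y} \<in> star_E m"
    and colour: "\<And>e. e \<in> induced_edges E S \<Longrightarrow> c e = col"
    using assms unfolding mono_induced_copy_def graph_iso_def star_V_def by blast
  obtain u where u: "u \<in> S" "f u = 0"
    using f by (metis atLeastAtMost_iff bij_betw_iff_bijections le0)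
  define L where "L = S - {u}"
  have f_L: "f x \<in> {1..m}" if "x \<in> L" for x
    using that u f unfolding L_def bij_betw_def inj_on_def by fastforce
  have spoke: "{u, x} \<in> induced_edges E S" if "x \<in> L" for x
    using iso[of u x] f_L[OF that] u that unfolding L_def by (auto simp: doubleton_mem_star_E)
  have "independent E L"
    unfolding independent_def
  proof (intro ballI impI)
    fix x y assume "x \<in> L" "y \<in> L" "x \<noteq> y"
    moreover have "{f x, f y} \<notin> star_E m"
      using f_L[OF \<open>x \<in> L\<close>] f_L[OF \<open>y \<in> L\<close>] by (auto simp: doubleton_mem_star_E)
    ultimately have "{x, y} \<notin> induced_edges E S"
      using iso[of x y] unfolding L_def by auto
    then show "{x, y} \<notin> E"
      using \<open>x \<in> L\<close> \<open>y \<in> L\<close> unfolding L_def induced_edges_def by auto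
  qed
  moreover have "card L = m"
    using bij_betw_same_card[OF f] u unfolding L_def by (simp add: bij_betw_finite[OF f])
  ultimately have "induced_star V E u L \<and> m \<le> card L \<and> (\<forall>x\<in>L. c {u, x} = col)"
    using \<open>S \<subseteq> V\<close> u spoke colour unfolding induced_star_def induced_edges_def L_def by auto
  then show ?thesis
    unfolding has_mono_star_def by blast
qed

lemma induced_edges_induced_star:
  assumes "induced_star V E u L" and "\<forall>e\<in>E. card e = 2"
  shows "induced_edges E (insert u L) = {{u, x} | x. x \<in> L}"
proof
  show "{{u, x} | x. x \<in> L} \<subseteq> induced_edges E (insert u L)"
    using assms(1) unfolding induced_star_def induced_edges_def by auto
  show "induced_edges E (insert u L) \<subseteq> {{u, x} | x. x \<in> L}"
  proof
    fix e assume e: "e \<in> induced_edges E (insert u L)"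
    then obtain a b where ab: "e = {a, b}" "a \<noteq> b" "a \<in> insert u L" "b \<in> insert u L" "e \<in> E"
      using assms(2) unfolding induced_edges_def by (auto simp: card_2_iff)
    then have "u \<in> e"
      using assms(1) unfolding induced_star_def independent_def by auto
    then show "e \<in> {{u, x} | x. x \<in> L}"
      using ab assms(1) unfolding induced_star_def by auto
  qed
qed

lemma graph_iso_induced_star:
  assumes "induced_star V E u L" and "finite L" and "\<forall>e\<in>E. card e = 2"
  shows "graph_iso (insert u L) (induced_edges E (insert u L)) (star_V (card L)) (star_E (card L))"
proof -
  let ?m = "card L" and ?S = "insert u L"
  obtain h where h: "bij_betw h L {1..?m}"
    using finite_same_card_bij[OF \<open>finite L\<close>, of "{1..?m}"] by auto
  define f where "f = h(u := 0)"
  have "u \<notin> L"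
    using assms(1) unfolding induced_star_def by auto
  then have f_L: "bij_betw f L {1..?m}"
    using h by (subst bij_betw_cong[where g = h]) (auto simp: f_def)
  have "f u = 0"
    unfolding f_def by simp
  have "{1..?m} \<union> {f u} = {0..?m}"
    using \<open>f u = 0\<close> by auto
  then have f: "bij_betw f ?S {0..?m}"
    using notIn_Un_bij_betw[OF \<open>u \<notin> L\<close> _ f_L] \<open>f u = 0\<close> by simp
  have "star_E ?m = (\<lambda>i. {0, i}) ` f ` L"
    using bij_betw_imp_surj_on[OF f_L] unfolding star_E_def Setcompr_eq_image by simp
  also have "\<dots> = image f ` (\<lambda>x. {u, x}) ` L"
    by (simp add: image_image \<open>f u = 0\<close>)
  finally have star_E_image: "star_E ?m = image f ` induced_edges E ?S"
    unfolding induced_edges_induced_star[OF assms(1,3)] Setcompr_eq_image .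
  have "induced_edges E ?S \<subseteq> Pow ?S"
    unfolding induced_edges_def by auto
  then have "{x, y} \<in> induced_edges E ?S \<longleftrightarrow> {f x, f y} \<in> star_E ?m"
    if "x \<in> ?S" "y \<in> ?S" for x y
    using inj_on_image_mem_iff[OF inj_on_image_Pow[OF bij_betw_imp_inj_on[OF f]], of "{x, y}"] that
    unfolding star_E_image by simp
  with f show ?thesis
    unfolding graph_iso_def star_V_def by blast
qed

lemma has_mono_star_imp_mono_induced_copy:
  assumes "\<forall>e\<in>E. card e = 2" and "has_mono_star V E c col m"
  shows "mono_induced_copy V E c col (star_V m) (star_E m)"
proof -
  obtain u L where star: "induced_star V E u L" and "m \<le> card L"
    and colour: "\<forall>x\<in>L. c {u, x} = col"
    using assms(2) unfolding has_mono_star_def by blast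
  obtain L' where "L' \<subseteq> L" and "card L' = m" and "finite L'"
    using obtain_subset_with_card_n[OF \<open>m \<le> card L\<close>] .
  have star': "induced_star V E u L'"
    using induced_star_subset[OF star \<open>L' \<subseteq> L\<close>] .
  then have "insert u L' \<subseteq> V"
    unfolding induced_star_def by auto
  moreover have "graph_iso (insert u L') (induced_edges E (insert u L')) (star_V m) (star_E m)"
    using graph_iso_induced_star[OF star' \<open>finite L'\<close> assms(1)] unfolding \<open>card L' = m\<close> .
  moreover have "\<forall>e\<in>induced_edges E (insert u L'). c e = col"
    using colour \<open>L' \<subseteq> L\<close> unfolding induced_edges_induced_star[OF star' assms(1)] by blast
  ultimately show ?thesis
    unfolding mono_induced_copy_def by blast
qed

lemma induced_star_star_graph:
  "L \<subseteq> {1..m} \<Longrightarrow> induced_star (star_V m) (star_E m) 0 L"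
  unfolding induced_star_def independent_def star_V_def by (auto simp: doubleton_mem_star_E)

lemma star_ind_arrows_stars:
  assumes "l + n \<le> m + 1"
  shows "ind_arrows (star_V m) (star_E m) (star_V l) (star_E l) (star_V n) (star_E n)"
  unfolding ind_arrows_def
proof
  fix c :: "nat set \<Rightarrow> bool"
  define R where "R = {i \<in> {1..m}. c {0, i}}"
  define B where "B = {i \<in> {1..m}. \<not> c {0, i}}"
  have "R \<union> B = {1..m}" and "R \<inter> B = {}" and "finite R" and "finite B"
    unfolding R_def B_def by auto
  then have "card R + card B = m"
    using card_Un_disjoint[of R B] by simp
  then have "l \<le> card R \<or> n \<le> card B"
    using assms by linarith
  moreover have "induced_star (star_V m) (star_E m) 0 R" "induced_star (star_V m) (star_E m) 0 B"
    by (auto intro!: induced_star_star_graph simp: R_def B_def)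
  ultimately have "has_mono_star (star_V m) (star_E m) c True l \<or>
      has_mono_star (star_V m) (star_E m) c False n"
    unfolding has_mono_star_def by (auto simp: R_def B_def)
  then show "mono_induced_copy (star_V m) (star_E m) c True (star_V l) (star_E l) \<or>
      mono_induced_copy (star_V m) (star_E m) c False (star_V n) (star_E n)"
    using has_mono_star_imp_mono_induced_copy simple_graph_star unfolding simple_graph_def by blast
qed

lemma exists_vertex_with_small_induced_stars:
  assumes "finite V" and "V \<noteq> {}"
  shows "\<exists>v\<in>V. \<forall>L. induced_star V E v L \<longrightarrow> 2 * card L \<le> card V"
proof -
  let ?indep = "\<lambda>J. J \<subseteq> V \<and> independent E J"
  obtain w where "w \<in> V"
    using assms(2) by blast
  then have "?indep {w}"
    unfolding independent_def by auto
  moreover have "\<forall>J. ?indep J \<longrightarrow> card J < Suc (card V)"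
    using card_mono[OF assms(1)] by (simp add: le_imp_less_Suc)
  ultimately obtain I where "?indep I" and I_max: "\<forall>J. ?indep J \<longrightarrow> card J \<le> card I"
    using ex_has_greatest_nat[of ?indep "{w}" card "Suc (card V)"] by blast
  then have "I \<subseteq> V" and indep_I: "independent E I"
    by auto
  have "card {w} \<le> card I"
    using I_max \<open>?indep {w}\<close> by blast
  then have "I \<noteq> {}"
    by auto
  then obtain v where "v \<in> I"
    by blast
  have "2 * card L \<le> card V" if star: "induced_star V E v L" for L
  proof -
    have "L \<subseteq> V" and "independent E L"
      using star unfolding induced_star_def by auto
    then have "card L \<le> card I"
      using I_max by blast
    have "x \<notin> I" if "x \<in> L" for x
    proof
      assume "x \<in> I"
      have "v \<noteq> x" and "{v, x} \<in> E"
        using star \<open>x \<in> L\<close> unfolding induced_star_def by auto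
      then show False
        using indep_I \<open>v \<in> I\<close> \<open>x \<in> I\<close> unfolding independent_def by simp
    qed
    then have "L \<inter> I = {}"
      by blast
    then have "card (L \<union> I) = card L + card I"
      using \<open>L \<subseteq> V\<close> \<open>I \<subseteq> V\<close> finite_subset[OF _ assms(1)] by (intro card_Un_disjoint) auto
    moreover have "card (L \<union> I) \<le> card V"
      using \<open>L \<subseteq> V\<close> \<open>I \<subseteq> V\<close> assms(1) by (intro card_mono) auto
    ultimately show ?thesis
      using \<open>card L \<le> card I\<close> by linarith
  qed
  moreover have "v \<in> V"
    using \<open>I \<subseteq> V\<close> \<open>v \<in> I\<close> by blast
  ultimately show ?thesis
    by blast
qed

lemma has_mono_star_negated_colouring:
  "has_mono_star V E (\<lambda>e. \<not> c e) col m \<longleftrightarrow> has_mono_star V E c (\<not> col) m"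
  unfolding has_mono_star_def by auto

lemma has_mono_star_avoiding_vertex:
  assumes "has_mono_star V E (\<lambda>e. if v \<in> e then col' else c e) col m"
    and "col' \<noteq> col" and "1 \<le> m"
  shows "has_mono_star (V - {v}) E c col m"
proof -
  obtain u L where star: "induced_star V E u L" and "m \<le> card L"
    and colour: "\<forall>x\<in>L. (if v \<in> {u, x} then col' else c {u, x}) = col"
    using assms(1) unfolding has_mono_star_def by blast
  have spokes_avoid_v: "v \<notin> {u, x}" and spoke_colour: "c {u, x} = col" if "x \<in> L" for x
    using colour that \<open>col' \<noteq> col\<close> by (auto split: if_splits)
  obtain x where "x \<in> L"
    using \<open>m \<le> card L\<close> \<open>1 \<le> m\<close> by fastforce
  then have "u \<noteq> v" and "L - {v} = L"
    using spokes_avoid_v by auto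
  then have "induced_star (V - {v}) E u L"
    using induced_star_Diff_vertex[OF star, of v] by simp
  then show ?thesis
    using \<open>m \<le> card L\<close> spoke_colour unfolding has_mono_star_def by blast
qed

lemma has_mono_star_minus_vertex:
  assumes "has_mono_star V E (\<lambda>e. if v \<in> e then col' else c e) col m"
  shows "(\<exists>L. induced_star V E v L \<and> m \<le> card L) \<or> has_mono_star (V - {v}) E c col (m - 1)"
proof -
  obtain u L where star: "induced_star V E u L" and "m \<le> card L"
    and colour: "\<forall>x\<in>L. (if v \<in> {u, x} then col' else c {u, x}) = col"
    using assms unfolding has_mono_star_def by blast
  show ?thesis
  proof (cases "u = v")
    case True
    with star \<open>m \<le> card L\<close> show ?thesis
      by blast
  next
    case False
    have "m - 1 \<le> card (L - {v})"
      using \<open>m \<le> card L\<close> card_Diff_singleton_if[of L v] by auto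
    moreover have "\<forall>x\<in>L - {v}. c {u, x} = col"
      using colour False by auto
    ultimately show ?thesis
      using induced_star_Diff_vertex[OF star False] unfolding has_mono_star_def by blast
  qed
qed

lemma no_mono_stars_all_blue:
  assumes "finite V" and "card V \<le> n"
  shows "\<not> has_mono_star V E (\<lambda>_. False) True 1 \<and> \<not> has_mono_star V E (\<lambda>_. False) False n"
proof -
  have "\<not> has_mono_star V E (\<lambda>_. False) False n"
  proof
    assume "has_mono_star V E (\<lambda>_. False) False n"
    then obtain u L where "u \<in> V" and "L \<subseteq> V - {u}" and "n \<le> card L"
      unfolding has_mono_star_def induced_star_def by blast
    then have "n \<le> card V - 1"
      using card_mono[of "V - {u}" L] \<open>finite V\<close> by simp
    then show False
      using \<open>card V \<le> n\<close> \<open>u \<in> V\<close> \<open>finite V\<close> card_gt_0_iff[of V] by auto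
  qed
  moreover have "\<not> has_mono_star V E (\<lambda>_. False) True 1"
    unfolding has_mono_star_def by fastforce
  ultimately show ?thesis
    by blast
qed

lemma no_mono_stars_blue_at_vertex:
  assumes v_small: "\<And>L. induced_star V E v L \<Longrightarrow> 2 * card L \<le> card V"
    and "card V < l + n" and "l \<le> n" and "1 \<le> l"
    and red: "\<not> has_mono_star (V - {v}) E c True l"
    and blue: "\<not> has_mono_star (V - {v}) E c False (n - 1)"
  shows "\<not> has_mono_star V E (\<lambda>e. if v \<in> e then False else c e) True l \<and>
    \<not> has_mono_star V E (\<lambda>e. if v \<in> e then False else c e) False n"
proof
  let ?c = "\<lambda>e. if v \<in> e then False else c e"
  show "\<not> has_mono_star V E ?c True l"
    using has_mono_star_avoiding_vertex[of V E v False c True l] red \<open>1 \<le> l\<close> by blast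
  show "\<not> has_mono_star V E ?c False n"
  proof
    assume "has_mono_star V E ?c False n"
    then consider L where "induced_star V E v L" and "n \<le> card L"
      | "has_mono_star (V - {v}) E c False (n - 1)"
      using has_mono_star_minus_vertex[of V E v False c False n] by blast
    then show False
    proof cases
      case 1
      then show False
        using v_small[of L] \<open>card V < l + n\<close> \<open>l \<le> n\<close> by linarith
    next
      case 2
      then show False
        using blue by blast
    qed
  qed
qed

lemma exists_colouring_without_mono_stars:
  assumes "finite V" and "card V < l + n" and "1 \<le> l" and "1 \<le> n"
  shows "\<exists>c. \<not> has_mono_star V E c True l \<and> \<not> has_mono_star V E c False n"
  using assms
proof (induction "card V" arbitrary: V l n rule: less_induct)
  case less
  have colouring_if_le: "\<exists>c. \<not> has_mono_star V E c True l \<and> \<not> has_mono_star V E c False n"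
    if "l \<le> n" and "card V < l + n" and "1 \<le> l" for l n
  proof -
    consider "l = 1" | "V = {}" | "2 \<le> l" and "V \<noteq> {}"
      using \<open>1 \<le> l\<close> by linarith
    then show ?thesis
    proof cases
      case 1
      then have "card V \<le> n"
        using \<open>card V < l + n\<close> by linarith
      then show ?thesis
        using no_mono_stars_all_blue[OF \<open>finite V\<close>] \<open>l = 1\<close> by blast
    next
      case 2
      then show ?thesis
        unfolding has_mono_star_def induced_star_def by blast
    next
      case 3
      obtain v where "v \<in> V" and v_small: "\<And>L. induced_star V E v L \<Longrightarrow> 2 * card L \<le> card V"
        using exists_vertex_with_small_induced_stars[OF \<open>finite V\<close> \<open>V \<noteq> {}\<close>] by blast
      have "0 < card V"
        using \<open>finite V\<close> \<open>v \<in> V\<close> card_gt_0_iff by blast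
      then have "card (V - {v}) < card V" and "card (V - {v}) < l + (n - 1)"
        using \<open>finite V\<close> \<open>v \<in> V\<close> \<open>card V < l + n\<close> \<open>2 \<le> l\<close> \<open>l \<le> n\<close> by auto
      moreover have "finite (V - {v})" and "1 \<le> n - 1"
        using \<open>finite V\<close> \<open>2 \<le> l\<close> \<open>l \<le> n\<close> by auto
      ultimately obtain c where "\<not> has_mono_star (V - {v}) E c True l"
        and "\<not> has_mono_star (V - {v}) E c False (n - 1)"
        using less.hyps \<open>1 \<le> l\<close> by blast
      then show ?thesis
        using no_mono_stars_blue_at_vertex[OF v_small] that by blast
    qed
  qed
  show ?case
  proof (cases "l \<le> n")
    case True
    then show ?thesis
      using colouring_if_le less.prems by blast
  next
    case False
    then obtain c where "\<not> has_mono_star V E c True n" and "\<not> has_mono_star V E c False l"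
      using colouring_if_le[of n l] less.prems by auto
    then show ?thesis
      using has_mono_star_negated_colouring[of V E c] by (metis (full_types))
  qed
qed

lemma ind_arrows_stars_imp_card_ge:
  assumes "finite V" and "ind_arrows V E (star_V l) (star_E l) (star_V n) (star_E n)"
    and "1 \<le> l" and "1 \<le> n"
  shows "l + n \<le> card V"
proof (rule ccontr)
  assume "\<not> l + n \<le> card V"
  then obtain c where "\<not> has_mono_star V E c True l" and "\<not> has_mono_star V E c False n"
    using exists_colouring_without_mono_stars[OF assms(1) _ assms(3,4)] by fastforce
  then show False
    using assms(2) mono_induced_copy_imp_has_mono_star unfolding ind_arrows_def by blast
qed

theorem lemma1:
  fixes l n :: nat
  assumes "l \<ge> 1" and "n \<ge> 1"
  shows "IR (star_V l) (star_E l) (star_V n) (star_E n) = n + l"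
  unfolding IR_def
proof (rule Least_equality)
  have "{0..<n + l} = star_V (l + n - 1)"
    using assms by (auto simp: star_V_def)
  then show "\<exists>E :: nat set set. simple_graph {0..<n + l} E \<and>
      ind_arrows {0..<n + l} E (star_V l) (star_E l) (star_V n) (star_E n)"
    using simple_graph_star star_ind_arrows_stars[of l n "l + n - 1"] assms by auto
next
  fix N
  assume "\<exists>E :: nat set set. simple_graph {0..<N} E \<and>
      ind_arrows {0..<N} E (star_V l) (star_E l) (star_V n) (star_E n)"
  then have "l + n \<le> N"
    using ind_arrows_stars_imp_card_ge[of "{0..<N}" _ l n] assms by auto
  then show "n + l \<le> N"
    by simp
qed

end
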